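(* Let $(\Sigma,E)$ be an algebraic theory with free monad $(T,\eta,\mu)$. Let $G:\mathbf{EM_s}(T)\to\mathbf{Alg}(\Sigma^{\mathrm{s}},E^{\mathrm{s}})$ send a $T$-semialgebra $(X,\alpha)$ to the algebra on $X$ interpreting $\mathsf{a}$ as $\alpha\circ\eta_X$ and each $(\mathsf{op}:n)\in\Sigma$ as $\alpha\circ\mathsf{op}^{TX}\circ(\eta_X)^n$, and act as the identity on morphisms. Let $H:\mathbf{Alg}(\Sigma^{\mathrm{s}},E^{\mathrm{s}})\to\mathbf{EM_s}(T)$ send $(X,I)$ to $(X,\alpha)$ with $\alpha(\overline{t})=I(t)_{I(\mathsf{a})}$, and act as the identity on morphisms. Then $G$ and $H$ are mutually inverse functors.
   Context: $T=T_{\Sigma,E}$: $TX$ is the set of $\Sigma$-terms over $X$ modulo the smallest congruence containing all substitution instances of $E$, with $\mathsf{op}^{TX}(\overline{t_1},\dots,\overline{t_n})=\overline{\mathsf{op}(t_1,\dots,t_n)}$, $\eta_X(x)=\overline{x}$, $\mu_X$ flattening terms. $\mathbf{EM_s}(T)$ is the category of $T$-semialgebras (maps $\alpha:TX\to X$ with $\alpha\circ\mu_X=\alpha\circ T\alpha$) and maps $f$ with $f\circ\alpha=\beta\circ Tf$. $\mathbf{Alg}(\Sigma^{\mathrm{s}},E^{\mathrm{s}})$ is the category of $(\Sigma^{\mathrm{s}},E^{\mathrm{s}})$-algebras, where $\Sigma^{\mathrm{s}}=\Sigma\uplus\{\mathsf{a}:1\}$ and $E^{\mathrm{s}}$ consists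 of $\mathsf{a}\mathsf{a}v_1=\mathsf{a}v_1$; $\mathsf{a}(\mathsf{op}(v_1,\dots,v_n))=\mathsf{op}(v_1,\dots,v_n)$ and $\mathsf{op}(\mathsf{a}v_1,\dots,\mathsf{a}v_n)=\mathsf{op}(v_1,\dots,v_n)$ for every $(\mathsf{op}:n)\in\Sigma$; and $t(\mathsf{a}v_1,\dots,\mathsf{a}v_n)=s(\mathsf{a}v_1,\dots,\mathsf{a}v_n)$ for every equation $t=s$ in $E$. $I(t)_{I(\mathsf{a})}$ is the value of the $\Sigma$-term $t$ over $X$ obtained by sending each element $x$ occurring as a variable to $I(\mathsf{a})(x)$ and interpreting operations via $I$. (It is part of the setting that $G$ and $H$ are well-defined functors.) *)

theory Defs
  imports Main
begin

text \<open>A signature is given by a type of operation symbols 'f together with an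
  arity function ar. Terms over a set of variables of type 'v.\<close>

datatype ('f, 'v) trm = Var 'v | Op 'f "('f, 'v) trm list"

inductive_set terms :: "('f \<Rightarrow> nat) \<Rightarrow> 'v set \<Rightarrow> ('f, 'v) trm set"
  for ar :: "'f \<Rightarrow> nat" and X :: "'v set" where
  var: "x \<in> X \<Longrightarrow> Var x \<in> terms ar X"
| op: "length ts = ar f \<Longrightarrow> (\<forall>t\<in>set ts. t \<in> terms ar X) \<Longrightarrow> Op f ts \<in> terms ar X"

fun subst :: "('v \<Rightarrow> ('f, 'w) trm) \<Rightarrow> ('f, 'v) trm \<Rightarrow> ('f, 'w) trm" where
  "subst \<sigma> (Var x) = \<sigma> x"
| "subst \<sigma> (Op f ts) = Op f (map (subst \<sigma>) ts)"

definition vmap :: "('v \<Rightarrow> 'w) \<Rightarrow> ('f, 'v) trm \<Rightarrow> ('f, 'w) trm" where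
  "vmap h = subst (\<lambda>x. Var (h x))"

inductive eqv :: "('f \<Rightarrow> nat) \<Rightarrow> (('f, nat) trm \<times> ('f, nat) trm) set \<Rightarrow> 'v set
                   \<Rightarrow> ('f, 'v) trm \<Rightarrow> ('f, 'v) trm \<Rightarrow> bool"
  for ar E X where
  refl: "t \<in> terms ar X \<Longrightarrow> eqv ar E X t t"
| sym: "eqv ar E X t s \<Longrightarrow> eqv ar E X s t"
| trans: "eqv ar E X t s \<Longrightarrow> eqv ar E X s u \<Longrightarrow> eqv ar E X t u"
| cong: "length ts = ar f \<Longrightarrow> list_all2 (eqv ar E X) ts ss \<Longrightarrow> eqv ar E X (Op f ts) (Op f ss)"
| inst: "(l, r) \<in> E \<Longrightarrow> (\<forall>v. \<sigma> v \<in> terms ar X) \<Longrightarrow> eqv ar E X (subst \<sigma> l) (subst \<sigma> r)"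

definition cls :: "('f \<Rightarrow> nat) \<Rightarrow> (('f, nat) trm \<times> ('f, nat) trm) set \<Rightarrow> 'v set
                   \<Rightarrow> ('f, 'v) trm \<Rightarrow> ('f, 'v) trm set" where
  "cls ar E X t = {s. eqv ar E X t s}"

definition Tobj :: "('f \<Rightarrow> nat) \<Rightarrow> (('f, nat) trm \<times> ('f, nat) trm) set \<Rightarrow> 'v set
                   \<Rightarrow> ('f, 'v) trm set set" where
  "Tobj ar E X = cls ar E X ` terms ar X"

definition rep :: "('f, 'v) trm set \<Rightarrow> ('f, 'v) trm" where
  "rep c = (SOME t. t \<in> c)"

definition eta :: "('f \<Rightarrow> nat) \<Rightarrow> (('f, nat) trm \<times> ('f, nat) trm) set \<Rightarrow> 'v set
                   \<Rightarrow> 'v \<Rightarrow> ('f, 'v) trm set" where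
  "eta ar E X x = cls ar E X (Var x)"

definition opT :: "('f \<Rightarrow> nat) \<Rightarrow> (('f, nat) trm \<times> ('f, nat) trm) set \<Rightarrow> 'v set
                   \<Rightarrow> 'f \<Rightarrow> ('f, 'v) trm set list \<Rightarrow> ('f, 'v) trm set" where
  "opT ar E X f cs = cls ar E X (Op f (map rep cs))"

definition Tmap :: "('f \<Rightarrow> nat) \<Rightarrow> (('f, nat) trm \<times> ('f, nat) trm) set \<Rightarrow> 'w set
                   \<Rightarrow> ('v \<Rightarrow> 'w) \<Rightarrow> ('f, 'v) trm set \<Rightarrow> ('f, 'w) trm set" where
  "Tmap ar E Y h c = cls ar E Y (vmap h (rep c))"

definition mu :: "('f \<Rightarrow> nat) \<Rightarrow> (('f, nat) trm \<times> ('f, nat) trm) set \<Rightarrow> 'v set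
                   \<Rightarrow> ('f, ('f, 'v) trm set) trm set \<Rightarrow> ('f, 'v) trm set" where
  "mu ar E X C = cls ar E X (subst rep (rep C))"

definition semialg :: "('f \<Rightarrow> nat) \<Rightarrow> (('f, nat) trm \<times> ('f, nat) trm) set \<Rightarrow> 'v set
                   \<Rightarrow> (('f, 'v) trm set \<Rightarrow> 'v) \<Rightarrow> bool" where
  "semialg ar E X \<alpha> \<longleftrightarrow>
     (\<forall>c \<in> Tobj ar E X. \<alpha> c \<in> X) \<and>
     (\<forall>C \<in> Tobj ar E (Tobj ar E X). \<alpha> (mu ar E X C) = \<alpha> (Tmap ar E X \<alpha> C))"

text \<open>An algebra for Sigma^s on carrier X is given by the interpretation a of the
  unary symbol a and the interpretation ops of the symbols of Sigma.\<close>

fun eval :: "('f \<Rightarrow> 'v list \<Rightarrow> 'v) \<Rightarrow> ('w \<Rightarrow> 'v) \<Rightarrow> ('f, 'w) trm \<Rightarrow> 'v" where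
  "eval ops \<rho> (Var x) = \<rho> x"
| "eval ops \<rho> (Op f ts) = ops f (map (eval ops \<rho>) ts)"

definition salg :: "('f \<Rightarrow> nat) \<Rightarrow> (('f, nat) trm \<times> ('f, nat) trm) set \<Rightarrow> 'v set
                   \<Rightarrow> ('v \<Rightarrow> 'v) \<Rightarrow> ('f \<Rightarrow> 'v list \<Rightarrow> 'v) \<Rightarrow> bool" where
  "salg ar E X a ops \<longleftrightarrow>
     (\<forall>x\<in>X. a x \<in> X) \<and>
     (\<forall>f xs. length xs = ar f \<and> set xs \<subseteq> X \<longrightarrow> ops f xs \<in> X) \<and>
     (\<forall>x\<in>X. a (a x) = a x) \<and>
     (\<forall>f xs. length xs = ar f \<and> set xs \<subseteq> X \<longrightarrow> a (ops f xs) = ops f xs) \<and>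
     (\<forall>f xs. length xs = ar f \<and> set xs \<subseteq> X \<longrightarrow> ops f (map a xs) = ops f xs) \<and>
     (\<forall>(l, r) \<in> E. \<forall>\<rho>. (\<forall>v. \<rho> v \<in> X) \<longrightarrow>
         eval ops (\<lambda>v. a (\<rho> v)) l = eval ops (\<lambda>v. a (\<rho> v)) r)"

section \<open>The functors G and H on objects (both are the identity on morphisms)\<close>

definition G_a :: "('f \<Rightarrow> nat) \<Rightarrow> (('f, nat) trm \<times> ('f, nat) trm) set \<Rightarrow> 'v set
                   \<Rightarrow> (('f, 'v) trm set \<Rightarrow> 'v) \<Rightarrow> 'v \<Rightarrow> 'v" where
  "G_a ar E X \<alpha> x = \<alpha> (eta ar E X x)"

definition G_ops :: "('f \<Rightarrow> nat) \<Rightarrow> (('f, nat) trm \<times> ('f, nat) trm) set \<Rightarrow> 'v set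
                   \<Rightarrow> (('f, 'v) trm set \<Rightarrow> 'v) \<Rightarrow> 'f \<Rightarrow> 'v list \<Rightarrow> 'v" where
  "G_ops ar E X \<alpha> f xs = \<alpha> (opT ar E X f (map (eta ar E X) xs))"

definition H :: "('v \<Rightarrow> 'v) \<Rightarrow> ('f \<Rightarrow> 'v list \<Rightarrow> 'v) \<Rightarrow> ('f, 'v) trm set \<Rightarrow> 'v" where
  "H a ops c = eval ops a (rep c)"

end

theory Submission
  imports Defs
begin

text \<open>Going from a semialgebra \<alpha> to G \<alpha> and back: by induction on terms, the G-algebra
  evaluates every term t to \<alpha> applied to its class; the inductive step is the semialgebra
  law \<alpha> \<circ> \<mu> = \<alpha> \<circ> T\<alpha> applied to the one-layer term op(c1, ..., cn) whose variables
  are the classes of the arguments. Going from an algebra to H and back: evaluation in a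
  (\<Sigma>^s, E^s)-algebra with variables interpreted through a respects the congruence generated
  by E, because such evaluations land in the image of a, on which a is the identity; hence
  H evaluates the class of any term to the value of that term.\<close>

lemma subst_in_terms:
  "u \<in> terms ar Y \<Longrightarrow> (\<forall>y\<in>Y. \<sigma> y \<in> terms ar X) \<Longrightarrow> subst \<sigma> u \<in> terms ar X"
  by (induction u rule: terms.induct) (auto intro!: terms.op)

lemma subst_subst: "subst \<sigma> (subst \<tau> l) = subst (\<lambda>v. subst \<sigma> (\<tau> v)) l"
  by (induction l) auto

lemma eqv_subst:
  "eqv ar E Y u v \<Longrightarrow> (\<forall>y\<in>Y. \<sigma> y \<in> terms ar X) \<Longrightarrow> eqv ar E X (subst \<sigma> u) (subst \<sigma> v)"
proof (induction rule: eqv.induct)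
  case (refl t)
  then show ?case by (auto intro!: eqv.refl subst_in_terms)
next
  case (sym t s)
  then show ?case by (auto intro: eqv.sym)
next
  case (trans t s u)
  then show ?case by (auto intro: eqv.trans)
next
  case (cong ts f ss)
  have "list_all2 (eqv ar E X) (map (subst \<sigma>) ts) (map (subst \<sigma>) ss)"
    using cong(2,3) by (auto simp: list_all2_conv_all_nth)
  then show ?case using cong(1) by (auto intro: eqv.cong)
next
  case (inst l r \<tau>)
  have "eqv ar E X (subst (\<lambda>v. subst \<sigma> (\<tau> v)) l) (subst (\<lambda>v. subst \<sigma> (\<tau> v)) r)"
    by (rule eqv.inst[OF inst(1)]) (use inst(2,3) subst_in_terms in blast)
  then show ?case by (simp add: subst_subst)
qed

lemma eqv_imp_cls_eq: "eqv ar E X t s \<Longrightarrow> cls ar E X t = cls ar E X s"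
  unfolding cls_def by (auto intro: eqv.trans eqv.sym)

lemma eqv_rep_cls: "t \<in> terms ar X \<Longrightarrow> eqv ar E X t (rep (cls ar E X t))"
  unfolding rep_def cls_def by (metis mem_Collect_eq someI eqv.refl)

lemma cls_rep_cls: "t \<in> terms ar X \<Longrightarrow> cls ar E X (rep (cls ar E X t)) = cls ar E X t"
  by (metis eqv_imp_cls_eq eqv_rep_cls)

lemma cls_Op_map_cong:
  assumes "length ts = ar f" and "\<And>t. t \<in> set ts \<Longrightarrow> eqv ar E X (g t) (h t)"
  shows "cls ar E X (Op f (map g ts)) = cls ar E X (Op f (map h ts))"
  by (rule eqv_imp_cls_eq, rule eqv.cong) (use assms in \<open>auto simp: list_all2_conv_all_nth\<close>)

lemma opT_eta:
  assumes "length xs = ar f" and "set xs \<subseteq> X"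
  shows "opT ar E X f (map (eta ar E X) xs) = cls ar E X (Op f (map Var xs))"
proof -
  have "cls ar E X (Op f (map (\<lambda>x. rep (cls ar E X (Var x))) xs)) = cls ar E X (Op f (map Var xs))"
    using assms by (intro cls_Op_map_cong) (auto intro: eqv.sym eqv_rep_cls terms.var)
  then show ?thesis by (simp add: opT_def eta_def comp_def)
qed

lemma Tmap_cls:
  assumes "u \<in> terms ar Y" and "\<forall>y\<in>Y. h y \<in> X"
  shows "Tmap ar E X h (cls ar E Y u) = cls ar E X (vmap h u)"
proof -
  have "eqv ar E X (vmap h u) (vmap h (rep (cls ar E Y u)))"
    unfolding vmap_def using assms by (intro eqv_subst[of _ _ Y] eqv_rep_cls) (auto intro: terms.var)
  then show ?thesis by (simp add: Tmap_def eqv_imp_cls_eq)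
qed

text \<open>Well-formedness of the equations is needed only to know that representatives of
  classes are terms: an ill-formed equation would put non-terms into classes.\<close>

context
  fixes ar :: "'f \<Rightarrow> nat" and E :: "(('f, nat) trm \<times> ('f, nat) trm) set"
  assumes E_terms: "\<forall>(l, r) \<in> E. l \<in> terms ar UNIV \<and> r \<in> terms ar UNIV"
begin

lemma eqv_imp_terms: "eqv ar E X t s \<Longrightarrow> t \<in> terms ar X \<and> s \<in> terms ar X"
proof (induction rule: eqv.induct)
  case (cong ts f ss)
  have "\<forall>t\<in>set ts. t \<in> terms ar X" "\<forall>t\<in>set ss. t \<in> terms ar X"
    using cong(2) by (auto simp: list_all2_conv_all_nth in_set_conv_nth)
  moreover have "length ss = ar f"
    using cong by (simp add: list_all2_lengthD)
  ultimately show ?case using cong(1) by (auto intro: terms.op)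
next
  case (inst l r \<sigma>)
  have "l \<in> terms ar UNIV" "r \<in> terms ar UNIV"
    using E_terms inst(1) by auto
  then show ?case using inst(2) by (simp add: subst_in_terms)
qed auto

lemma rep_Tobj_in_terms: "c \<in> Tobj ar E X \<Longrightarrow> rep c \<in> terms ar X"
  unfolding Tobj_def using eqv_imp_terms eqv_rep_cls by blast

lemma mu_cls:
  assumes "u \<in> terms ar (Tobj ar E X)"
  shows "mu ar E X (cls ar E (Tobj ar E X) u) = cls ar E X (subst rep u)"
proof -
  have "eqv ar E X (subst rep u) (subst rep (rep (cls ar E (Tobj ar E X) u)))"
    using assms rep_Tobj_in_terms by (intro eqv_subst[of _ _ "Tobj ar E X"] eqv_rep_cls) auto
  then show ?thesis by (simp add: mu_def eqv_imp_cls_eq)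
qed

lemma eval_G_eq_cls:
  assumes sa: "semialg ar E X \<alpha>"
  shows "s \<in> terms ar X \<Longrightarrow> eval (G_ops ar E X \<alpha>) (G_a ar E X \<alpha>) s = \<alpha> (cls ar E X s)"
proof (induction s rule: terms.induct)
  case (var x)
  then show ?case by (simp add: G_a_def eta_def)
next
  case (op ts f)
  have \<alpha>_closed: "\<forall>c \<in> Tobj ar E X. \<alpha> c \<in> X"
    and \<alpha>_law: "\<forall>C \<in> Tobj ar E (Tobj ar E X). \<alpha> (mu ar E X C) = \<alpha> (Tmap ar E X \<alpha> C)"
    using sa unfolding semialg_def by auto
  have cls_Tobj: "cls ar E X t \<in> Tobj ar E X" if "t \<in> set ts" for t
    using op(2) that unfolding Tobj_def by blast
  define u where "u = Op f (map (\<lambda>t. Var (cls ar E X t)) ts)"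
  have u: "u \<in> terms ar (Tobj ar E X)"
    unfolding u_def using op(1) cls_Tobj by (auto intro!: terms.op terms.var)
  define C where "C = cls ar E (Tobj ar E X) u"
  have "C \<in> Tobj ar E (Tobj ar E X)"
    unfolding C_def Tobj_def[of ar E "Tobj ar E X"] using u by (rule imageI)
  then have law: "\<alpha> (Tmap ar E X \<alpha> C) = \<alpha> (mu ar E X C)" using \<alpha>_law by simp
  have "mu ar E X C = cls ar E X (Op f (map (\<lambda>t. rep (cls ar E X t)) ts))"
    unfolding C_def mu_cls[OF u] by (simp add: u_def comp_def)
  also have "\<dots> = cls ar E X (Op f (map (\<lambda>t. t) ts))"
    using op by (intro cls_Op_map_cong) (auto intro: eqv.sym eqv_rep_cls)
  finally have mu_C: "mu ar E X C = cls ar E X (Op f ts)" by simp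
  have "Tmap ar E X \<alpha> C = cls ar E X (Op f (map Var (map (\<lambda>t. \<alpha> (cls ar E X t)) ts)))"
    unfolding C_def Tmap_cls[OF u \<alpha>_closed] by (simp add: u_def vmap_def comp_def)
  also have "\<dots> = opT ar E X f (map (eta ar E X) (map (\<lambda>t. \<alpha> (cls ar E X t)) ts))"
    using op(1) cls_Tobj \<alpha>_closed by (intro opT_eta[symmetric]) auto
  finally have Tmap_C:
    "\<alpha> (Tmap ar E X \<alpha> C) = G_ops ar E X \<alpha> f (map (\<lambda>t. \<alpha> (cls ar E X t)) ts)"
    by (simp add: G_ops_def)
  have "eval (G_ops ar E X \<alpha>) (G_a ar E X \<alpha>) (Op f ts)
      = G_ops ar E X \<alpha> f (map (\<lambda>t. \<alpha> (cls ar E X t)) ts)"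
    using op(2) by (simp cong: map_cong)
  also have "\<dots> = \<alpha> (cls ar E X (Op f ts))"
    using law by (simp add: Tmap_C mu_C)
  finally show ?case .
qed

lemma H_G_semialg:
  assumes "semialg ar E X \<alpha>" and "c \<in> Tobj ar E X"
  shows "H (G_a ar E X \<alpha>) (G_ops ar E X \<alpha>) c = \<alpha> c"
proof -
  obtain t where "t \<in> terms ar X" and "c = cls ar E X t"
    using assms(2) unfolding Tobj_def by blast
  then have "cls ar E X (rep c) = c" by (simp add: cls_rep_cls)
  then show ?thesis
    unfolding H_def using eval_G_eq_cls[OF assms(1) rep_Tobj_in_terms[OF assms(2)]] by simp
qed

end

lemma eval_subst: "eval ops a (subst \<sigma> l) = eval ops (\<lambda>v. eval ops a (\<sigma> v)) l"
  by (induction l) (simp_all add: comp_def cong: map_cong)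

lemma salg_eval_closed:
  assumes sa: "salg ar E X a ops"
  shows "t \<in> terms ar X \<Longrightarrow> eval ops a t \<in> X \<and> a (eval ops a t) = eval ops a t"
proof (induction t rule: terms.induct)
  case (var x)
  then show ?case using sa unfolding salg_def by auto
next
  case (op ts f)
  have "set (map (eval ops a) ts) \<subseteq> X" using op(2) by auto
  then show ?case using sa op(1) unfolding salg_def by auto
qed

lemma salg_eval_eqv:
  assumes sa: "salg ar E X a ops"
  shows "eqv ar E X u v \<Longrightarrow> eval ops a u = eval ops a v"
proof (induction rule: eqv.induct)
  case (cong ts f ss)
  then have "map (eval ops a) ts = map (eval ops a) ss"
    by (auto simp: list_all2_conv_all_nth intro: nth_equalityI)
  then show ?case by simp
next
  case (inst l r \<sigma>)
  define \<rho> where "\<rho> = (\<lambda>v. eval ops a (\<sigma> v))"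
  have "\<forall>v. \<rho> v \<in> X" and a_\<rho>: "(\<lambda>v. a (\<rho> v)) = \<rho>"
    using salg_eval_closed[OF sa] inst(2) unfolding \<rho>_def by auto
  then have "eval ops (\<lambda>v. a (\<rho> v)) l = eval ops (\<lambda>v. a (\<rho> v)) r"
    using sa inst(1) unfolding salg_def by blast
  then have "eval ops \<rho> l = eval ops \<rho> r"
    by (simp only: a_\<rho>)
  then show ?case unfolding eval_subst \<rho>_def .
qed auto

lemma H_cls:
  assumes "salg ar E X a ops" and "t \<in> terms ar X"
  shows "H a ops (cls ar E X t) = eval ops a t"
  unfolding H_def using salg_eval_eqv[OF assms(1) eqv_rep_cls[OF assms(2)]] by simp

lemma G_a_H_salg:
  assumes "salg ar E X a ops" and "x \<in> X"
  shows "G_a ar E X (H a ops) x = a x"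
  using H_cls[OF assms(1) terms.var[OF assms(2)]] by (simp add: G_a_def eta_def)

lemma G_ops_H_salg:
  assumes sa: "salg ar E X a ops" and xs: "length xs = ar f" "set xs \<subseteq> X"
  shows "G_ops ar E X (H a ops) f xs = ops f xs"
proof -
  have "Op f (map Var xs) \<in> terms ar X"
    using xs by (auto intro!: terms.op terms.var)
  then have "G_ops ar E X (H a ops) f xs = ops f (map a xs)"
    using xs by (simp add: G_ops_def opT_eta H_cls[OF sa] comp_def)
  also have "\<dots> = ops f xs"
    using sa xs unfolding salg_def by blast
  finally show ?thesis .
qed

theorem lemma16:
  fixes ar :: "'f \<Rightarrow> nat"
    and E :: "(('f, nat) trm \<times> ('f, nat) trm) set"
  assumes "\<forall>(l, r) \<in> E. l \<in> terms ar UNIV \<and> r \<in> terms ar UNIV"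
  shows "(\<forall>(X :: 'v set) \<alpha>. semialg ar E X \<alpha> \<longrightarrow>
            (\<forall>c \<in> Tobj ar E X. H (G_a ar E X \<alpha>) (G_ops ar E X \<alpha>) c = \<alpha> c))
       \<and> (\<forall>(X :: 'v set) a ops. salg ar E X a ops \<longrightarrow>
            (\<forall>x \<in> X. G_a ar E X (H a ops) x = a x) \<and>
            (\<forall>f xs. length xs = ar f \<and> set xs \<subseteq> X \<longrightarrow>
                G_ops ar E X (H a ops) f xs = ops f xs))"
  by (simp add: H_G_semialg[OF assms] G_a_H_salg G_ops_H_salg)

end
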